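(* Let $(M,d)$ be a compact metric space and $\varphi:M\to M$ continuous, and assume either (C) there is a homeomorphism $\theta$ of $M$ with $\theta\circ\theta=\mathrm{Id}_M$ and $\varphi=\theta\circ\varphi\circ\theta$ (set $\theta_n=\theta$), or (R) $\varphi$ is a homeomorphism and there is a homeomorphism $\theta$ with $\theta\circ\theta=\mathrm{Id}_M$ and $\varphi^{-1}=\theta\circ\varphi\circ\theta$ (set $\theta_n=\theta\circ\varphi^{n-1}$). If $\mathcal G=\{G_n\}$ is asymptotically additive with approximating sequence $\{G^{(k)}\}$, then $\mathcal G\circ\theta:=\{G_n\circ\theta_n\}$ is asymptotically additive with approximating sequence $\{G^{(k)}\circ\theta\}$.
   Context: $C(M),B(M)$: continuous/bounded Borel real functions with sup norm; $S_nG=\sum_{k<n}G\circ\varphi^k$. $\mathcal G=\{G_n\}\subset B(M)$ is asymptotically additive with approximating sequence $\{G^{(k)}\}\subset C(M)$ if $\lim_k\limsup_nn^{-1}\|G_n-S_nG^{(k)}\|_\infty=0$. *)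

theory Defs
  imports "HOL-Analysis.Analysis" "HOL-Library.Extended_Real" "HOL-Library.Liminf_Limsup"
begin

text \<open>The compact metric space M is the whole type 'a (with compact UNIV assumed).\<close>

definition sup_norm :: "('a \<Rightarrow> real) \<Rightarrow> real" where
  "sup_norm f = (SUP x. \<bar>f x\<bar>)"

definition birkhoff_sum :: "('a \<Rightarrow> 'a) \<Rightarrow> nat \<Rightarrow> ('a \<Rightarrow> real) \<Rightarrow> 'a \<Rightarrow> real" where
  "birkhoff_sum \<phi> n g x = (\<Sum>k<n. g ((\<phi> ^^ k) x))"

definition bounded_borel :: "('a::topological_space \<Rightarrow> real) \<Rightarrow> bool" where
  "bounded_borel f \<longleftrightarrow> f \<in> borel_measurable borel \<and> bounded (range f)"

definition asymptotically_additive ::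
  "('a::metric_space \<Rightarrow> 'a) \<Rightarrow> (nat \<Rightarrow> 'a \<Rightarrow> real) \<Rightarrow> (nat \<Rightarrow> 'a \<Rightarrow> real) \<Rightarrow> bool" where
  "asymptotically_additive \<phi> G Gk \<longleftrightarrow>
     (\<forall>n. bounded_borel (G n)) \<and> (\<forall>k. continuous_on UNIV (Gk k)) \<and>
     ((\<lambda>k. limsup (\<lambda>n. ereal (sup_norm (\<lambda>x. G n x - birkhoff_sum \<phi> n (Gk k) x) / real n)))
        \<longlonglongrightarrow> 0)"

end

theory Submission
  imports Defs
begin

text \<open>In both cases \<open>\<theta>\<^sub>n\<close> is a continuous surjection with
  \<open>S\<^sub>n (g \<circ> \<theta>) = S\<^sub>n g \<circ> \<theta>\<^sub>n\<close> for every \<open>g\<close>: for a commuting involution this is immediate, and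
  for a reversing one the orbit segment of length \<open>n\<close> starting at \<open>x\<close> is mapped by \<open>\<theta>\<close> onto
  the same segment traversed backwards from \<open>\<theta> (\<phi>\<^sup>n\<^sup>-\<^sup>1 x)\<close>. Precomposing with a surjection does
  not change sup norms, so every error term \<open>\<parallel>G\<^sub>n - S\<^sub>n G\<^sup>(\<^sup>k\<^sup>)\<parallel>\<close> is unchanged.\<close>

lemma sup_norm_comp_surj:
  assumes "surj \<sigma>"
  shows "sup_norm (f \<circ> \<sigma>) = sup_norm f"
proof -
  have "sup_norm (f \<circ> \<sigma>) = Sup ((\<lambda>y. \<bar>f y\<bar>) ` range \<sigma>)"
    unfolding sup_norm_def image_image by simp
  then show ?thesis
    using assms by (simp add: sup_norm_def)
qed

lemma bounded_borel_comp_continuous: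
  assumes "bounded_borel f" and "continuous_on UNIV \<sigma>"
  shows "bounded_borel (f \<circ> \<sigma>)"
proof -
  have "\<sigma> \<in> borel_measurable borel"
    using assms(2) by (rule borel_measurable_continuous_onI)
  moreover have "range (f \<circ> \<sigma>) \<subseteq> range f"
    by auto
  ultimately show ?thesis
    using assms(1) unfolding bounded_borel_def by (metis measurable_comp bounded_subset)
qed

lemma continuous_on_funpow:
  fixes f :: "'a::topological_space \<Rightarrow> 'a"
  assumes "continuous_on UNIV f"
  shows "continuous_on UNIV (f ^^ n)"
proof (induction n)
  case 0
  show ?case
    by (simp add: id_def continuous_on_id)
next
  case (Suc n)
  then show ?case
    using continuous_on_compose[OF Suc continuous_on_subset[OF assms]] by simp
qed

lemma asymptotically_additive_reparametrize:
  assumes aa: "asymptotically_additive \<phi> G Gk"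
    and cont: "continuous_on UNIV \<theta>" "\<And>n. continuous_on UNIV (\<theta>n n)"
    and surj: "\<And>n. surj (\<theta>n n)"
    and birkhoff: "\<And>n g. birkhoff_sum \<phi> n (g \<circ> \<theta>) = birkhoff_sum \<phi> n g \<circ> \<theta>n n"
  shows "asymptotically_additive \<phi> (\<lambda>n. G n \<circ> \<theta>n n) (\<lambda>k. Gk k \<circ> \<theta>)"
proof -
  have error_eq: "sup_norm (\<lambda>x. (G n \<circ> \<theta>n n) x - birkhoff_sum \<phi> n (Gk k \<circ> \<theta>) x)
      = sup_norm (\<lambda>x. G n x - birkhoff_sum \<phi> n (Gk k) x)" for n k
  proof -
    have "(\<lambda>x. (G n \<circ> \<theta>n n) x - birkhoff_sum \<phi> n (Gk k \<circ> \<theta>) x)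
        = (\<lambda>y. G n y - birkhoff_sum \<phi> n (Gk k) y) \<circ> \<theta>n n"
      unfolding birkhoff by (simp add: comp_def)
    then show ?thesis
      using sup_norm_comp_surj[OF surj] by simp
  qed
  have "bounded_borel (G n \<circ> \<theta>n n)" for n
    using aa cont(2) bounded_borel_comp_continuous
    unfolding asymptotically_additive_def by blast
  moreover have "continuous_on UNIV (Gk k \<circ> \<theta>)" for k
    using aa cont(1) unfolding asymptotically_additive_def
    by (metis continuous_on_compose continuous_on_subset subset_UNIV)
  ultimately show ?thesis
    using aa unfolding asymptotically_additive_def error_eq by simp
qed

lemma birkhoff_sum_comp_commuting:
  assumes "\<theta> \<circ> \<phi> = \<phi> \<circ> \<theta>"
  shows "birkhoff_sum \<phi> n (g \<circ> \<theta>) = birkhoff_sum \<phi> n g \<circ> \<theta>"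
proof -
  have "\<theta> ((\<phi> ^^ k) x) = (\<phi> ^^ k) (\<theta> x)" for k x
    using fun_cong[OF assms] by (induction k) simp_all
  then show ?thesis
    by (simp add: birkhoff_sum_def fun_eq_iff)
qed

lemma funpow_reversed:
  assumes "\<And>x. \<phi> (\<theta> (\<phi> x)) = \<theta> x"
  shows "(\<phi> ^^ m) (\<theta> ((\<phi> ^^ (m + k)) x)) = \<theta> ((\<phi> ^^ k) x)"
proof (induction m)
  case 0
  show ?case by simp
next
  case (Suc m)
  have "(\<phi> ^^ Suc m) (\<theta> ((\<phi> ^^ (Suc m + k)) x))
      = (\<phi> ^^ m) (\<phi> (\<theta> (\<phi> ((\<phi> ^^ (m + k)) x))))"
    by (simp add: funpow_swap1)
  also have "\<dots> = (\<phi> ^^ m) (\<theta> ((\<phi> ^^ (m + k)) x))"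
    by (simp add: assms)
  finally show ?case
    using Suc by simp
qed

lemma birkhoff_sum_comp_reversing:
  assumes "\<And>x. \<phi> (\<theta> (\<phi> x)) = \<theta> x"
  shows "birkhoff_sum \<phi> n (g \<circ> \<theta>) = birkhoff_sum \<phi> n g \<circ> (\<theta> \<circ> \<phi> ^^ (n - 1))"
proof
  fix x
  have "birkhoff_sum \<phi> n (g \<circ> \<theta>) x = (\<Sum>k<n. g ((\<phi> ^^ (n - Suc k)) (\<theta> ((\<phi> ^^ (n - 1)) x))))"
    unfolding birkhoff_sum_def
  proof (rule sum.cong[OF refl])
    fix k
    assume "k \<in> {..<n}"
    then have "n - 1 = (n - Suc k) + k"
      by auto
    then show "(g \<circ> \<theta>) ((\<phi> ^^ k) x) = g ((\<phi> ^^ (n - Suc k)) (\<theta> ((\<phi> ^^ (n - 1)) x)))"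
      using funpow_reversed[where \<phi> = \<phi> and \<theta> = \<theta>, OF assms, of "n - Suc k" k x] by simp
  qed
  also have "\<dots> = (birkhoff_sum \<phi> n g \<circ> (\<theta> \<circ> \<phi> ^^ (n - 1))) x"
    unfolding birkhoff_sum_def comp_def by (rule sum.nat_diff_reindex)
  finally show "birkhoff_sum \<phi> n (g \<circ> \<theta>) x = (birkhoff_sum \<phi> n g \<circ> (\<theta> \<circ> \<phi> ^^ (n - 1))) x" .
qed

lemma asymptotically_additive_comp_commuting_involution:
  assumes aa: "asymptotically_additive \<phi> G Gk"
    and \<theta>: "homeomorphism UNIV UNIV \<theta> \<theta>"
    and conj: "\<phi> = \<theta> \<circ> \<phi> \<circ> \<theta>"
  shows "asymptotically_additive \<phi> (\<lambda>n. G n \<circ> \<theta>) (\<lambda>k. Gk k \<circ> \<theta>)"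
proof -
  have involution: "\<And>x. \<theta> (\<theta> x) = x" and cont_\<theta>: "continuous_on UNIV \<theta>"
    using \<theta> unfolding homeomorphism_def by auto
  have commute: "\<theta> \<circ> \<phi> = \<phi> \<circ> \<theta>"
  proof
    fix x
    have "\<phi> (\<theta> x) = \<theta> (\<phi> (\<theta> (\<theta> x)))"
      by (subst conj) simp
    then show "(\<theta> \<circ> \<phi>) x = (\<phi> \<circ> \<theta>) x"
      by (simp add: involution)
  qed
  have "surj \<theta>"
    by (metis involution surjI)
  then show ?thesis
    using asymptotically_additive_reparametrize[OF aa cont_\<theta> cont_\<theta> _ birkhoff_sum_comp_commuting[OF commute]]
    by blast
qed

lemma asymptotically_additive_comp_reversing_involution:
  assumes aa: "asymptotically_additive \<phi> G Gk"
    and cont_\<phi>: "continuous_on UNIV \<phi>"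
    and \<theta>: "homeomorphism UNIV UNIV \<theta> \<theta>"
    and \<phi>\<psi>: "homeomorphism UNIV UNIV \<phi> \<psi>" and \<psi>: "\<psi> = \<theta> \<circ> \<phi> \<circ> \<theta>"
  shows "asymptotically_additive \<phi> (\<lambda>n. G n \<circ> (\<theta> \<circ> \<phi> ^^ (n - 1))) (\<lambda>k. Gk k \<circ> \<theta>)"
proof -
  have involution: "\<And>x. \<theta> (\<theta> x) = x" and cont_\<theta>: "continuous_on UNIV \<theta>"
    using \<theta> unfolding homeomorphism_def by auto
  have right_inverse: "\<And>x. \<phi> (\<psi> x) = x"
    using \<phi>\<psi> unfolding homeomorphism_def by auto
  have reversing: "\<phi> (\<theta> (\<phi> x)) = \<theta> x" for x
    using right_inverse[of "\<theta> x"] by (simp add: \<psi> involution)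
  have "surj \<phi>" "surj \<theta>"
    by (metis right_inverse surjI, metis involution surjI)
  then have "surj (\<theta> \<circ> \<phi> ^^ m)" for m
    using comp_surj[OF surj_fn] by blast
  moreover have "continuous_on UNIV (\<theta> \<circ> \<phi> ^^ m)" for m
    using continuous_on_compose[OF continuous_on_funpow[OF cont_\<phi>] continuous_on_subset[OF cont_\<theta>]]
    by simp
  ultimately show ?thesis
    using asymptotically_additive_reparametrize[OF aa cont_\<theta>, of "\<lambda>n. \<theta> \<circ> \<phi> ^^ (n - 1)"]
      birkhoff_sum_comp_reversing[where \<phi> = \<phi> and \<theta> = \<theta>, OF reversing] by simp
qed

theorem lemma3p6:
  fixes \<phi> \<theta> :: "'a::metric_space \<Rightarrow> 'a"
    and \<theta>n :: "nat \<Rightarrow> 'a \<Rightarrow> 'a"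
    and G Gk :: "nat \<Rightarrow> 'a \<Rightarrow> real"
  assumes "compact (UNIV :: 'a set)"
    and "continuous_on UNIV \<phi>"
    and "homeomorphism UNIV UNIV \<theta> \<theta>"
    and "(\<phi> = \<theta> \<circ> \<phi> \<circ> \<theta> \<and> \<theta>n = (\<lambda>n. \<theta>))
         \<or> ((\<exists>\<psi>. homeomorphism UNIV UNIV \<phi> \<psi> \<and> \<psi> = \<theta> \<circ> \<phi> \<circ> \<theta>)
            \<and> \<theta>n = (\<lambda>n. \<theta> \<circ> (\<phi> ^^ (n - 1))))"
    and "asymptotically_additive \<phi> G Gk"
  shows "asymptotically_additive \<phi> (\<lambda>n. G n \<circ> \<theta>n n) (\<lambda>k. Gk k \<circ> \<theta>)"
  using assms(4)
proof
  assume "\<phi> = \<theta> \<circ> \<phi> \<circ> \<theta> \<and> \<theta>n = (\<lambda>n. \<theta>)"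
  then show ?thesis
    using asymptotically_additive_comp_commuting_involution[OF assms(5) assms(3)] by auto
next
  assume "(\<exists>\<psi>. homeomorphism UNIV UNIV \<phi> \<psi> \<and> \<psi> = \<theta> \<circ> \<phi> \<circ> \<theta>)
          \<and> \<theta>n = (\<lambda>n. \<theta> \<circ> (\<phi> ^^ (n - 1)))"
  then show ?thesis
    using asymptotically_additive_comp_reversing_involution[OF assms(5) assms(2) assms(3)] by auto
qed

end
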